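(* Let $E$ be a real Banach space and $\mathcal{C}\subset E$ a regular Birkhoff cone with $\ell\in E'$, $\|\ell\|=1$, and $K<\infty$ such that $\frac1K\|u\|\le\langle\ell,u\rangle\le\|u\|$ for $u\in\mathcal{C}$. Let $\mathcal{C}_1\subset\mathcal{C}$ be a subcone with finite Hilbert diameter $\Delta=\sup\{d_{\mathcal{C}}(a,b):a,b\in\mathcal{C}_1\setminus\{0\}\}<+\infty$. Suppose there are $x\in\mathcal{C}_1$ with $\langle\ell,x\rangle=1$ and $r>0$ with $B(x,r)\subset\mathcal{C}_1$. Then for every $y\in\mathcal{C}_1$, \[B_E\Big(y,\frac1K re^{-\Delta}\|y\|\Big)\subset\mathcal{C}.\]
   Context: A Birkhoff cone is a closed convex set $\mathcal{C}\subset E$ with $\mathbb{R}_+\mathcal{C}=\mathcal{C}$ and $\mathcal{C}\cap(-\mathcal{C})=\{0\}$; regular means it has non-empty interior and the stated outer regularity functional exists. A subcone is a subset $\mathcal{C}_1\subset\mathcal{C}$ with $\mathbb{R}_+\mathcal{C}_1=\mathcal{C}_1$. Hilbert metric: $\delta(a,b)=\inf\{t>0:ta-b\in\mathcal{C}\}$, $d_{\mathcal{C}}(a,b)=\log(\delta(a,b)\delta(b,a))$ for $a,b\in\mathcal{C}\setminus\{0\}$. *)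

theory Defs
  imports "HOL-Analysis.Analysis"
begin

definition birkhoff_cone :: "'a::real_normed_vector set \<Rightarrow> bool" where
  "birkhoff_cone C \<longleftrightarrow> closed C \<and> convex C
     \<and> {t *\<^sub>R u | t u. t \<ge> 0 \<and> u \<in> C} = C
     \<and> C \<inter> uminus ` C = {0}"

definition subcone :: "'a::real_normed_vector set \<Rightarrow> 'a set \<Rightarrow> bool" where
  "subcone C1 C \<longleftrightarrow> C1 \<subseteq> C \<and> {t *\<^sub>R u | t u. t \<ge> 0 \<and> u \<in> C1} = C1"

definition hilbert_delta :: "'a::real_normed_vector set \<Rightarrow> 'a \<Rightarrow> 'a \<Rightarrow> ereal" where
  "hilbert_delta C a b = Inf (ereal ` {t. t > 0 \<and> t *\<^sub>R a - b \<in> C})"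

definition hilbert_dist :: "'a::real_normed_vector set \<Rightarrow> 'a \<Rightarrow> 'a \<Rightarrow> ereal" where
  "hilbert_dist C a b =
     (if hilbert_delta C a b = \<infinity> \<or> hilbert_delta C b a = \<infinity> then \<infinity>
      else ereal (ln (real_of_ereal (hilbert_delta C a b) * real_of_ereal (hilbert_delta C b a))))"

definition hilbert_diam :: "'a::real_normed_vector set \<Rightarrow> 'a set \<Rightarrow> ereal" where
  "hilbert_diam C C1 = (SUP p \<in> (C1 - {0}) \<times> (C1 - {0}). hilbert_dist C (fst p) (snd p))"

end

(* For y in C1 the Hilbert diameter bounds the product delta(y,x) delta(x,y) by e^Delta, and
   applying l to t x - y in C gives delta(x,y) >= l y >= |y|/K; hence delta(y,x) <= K e^Delta / |y|.
   So there are t close to K e^Delta / |y| with t y - x in C, and for |z - y| < r e^-Delta |y| / K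
   the vector t z = (t y - x) + (x + t (z - y)) is a sum of two elements of C, the second one
   lying in ball x r. *)
theory Submission
  imports Defs
begin

lemma birkhoff_cone_scaleR:
  assumes "birkhoff_cone C" "0 \<le> t" "u \<in> C"
  shows "t *\<^sub>R u \<in> C"
proof -
  have "t *\<^sub>R u \<in> {t *\<^sub>R u | t u. t \<ge> 0 \<and> u \<in> C}" using assms(2,3) by blast
  then show ?thesis using assms(1) unfolding birkhoff_cone_def by simp
qed

lemma birkhoff_cone_add:
  assumes "birkhoff_cone C" "u \<in> C" "v \<in> C"
  shows "u + v \<in> C"
proof -
  have "(1/2) *\<^sub>R u + (1/2) *\<^sub>R v \<in> C"
    using assms unfolding birkhoff_cone_def convex_def by auto
  then have "2 *\<^sub>R ((1/2) *\<^sub>R u + (1/2) *\<^sub>R v) \<in> C"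
    using birkhoff_cone_scaleR[OF assms(1)] by simp
  then show ?thesis by (simp add: scaleR_add_right)
qed

lemma birkhoff_cone_scaleR_cancel:
  assumes "birkhoff_cone C" "0 < t" "t *\<^sub>R u \<in> C"
  shows "u \<in> C"
  using birkhoff_cone_scaleR[OF assms(1), of "1 / t" "t *\<^sub>R u"] assms(2,3) by simp

lemma hilbert_delta_nonneg: "0 \<le> hilbert_delta C a b"
  unfolding hilbert_delta_def by (auto intro: Inf_greatest)

lemma hilbert_delta_lessE:
  assumes "hilbert_delta C a b < ereal s"
  obtains t where "0 < t" "t < s" "t *\<^sub>R a - b \<in> C"
  using assms unfolding hilbert_delta_def Inf_less_iff by auto

lemma hilbert_delta_ge_functional:
  assumes "linear l" and nonneg: "\<And>u. u \<in> C \<Longrightarrow> 0 \<le> l u" and "0 < l a"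
  shows "ereal (l b / l a) \<le> hilbert_delta C a b"
  unfolding hilbert_delta_def
proof (rule Inf_greatest, clarify)
  fix t :: real assume "t *\<^sub>R a - b \<in> C"
  then have "0 \<le> l (t *\<^sub>R a - b)" by (rule nonneg)
  then have "0 \<le> t * l a - l b" by (simp add: linear_diff[OF assms(1)] linear_scale[OF assms(1)])
  then show "ereal (l b / l a) \<le> ereal t" using \<open>0 < l a\<close> by (simp add: divide_le_eq)
qed

lemma hilbert_delta_le_of_dist:
  assumes dist: "hilbert_dist C a b \<le> ereal D"
    and lower: "ereal \<beta> \<le> hilbert_delta C b a" and "0 < \<beta>"
  shows "hilbert_delta C a b \<le> ereal (exp D / \<beta>)"
proof -
  have finite: "hilbert_delta C a b \<noteq> \<infinity>" "hilbert_delta C b a \<noteq> \<infinity>"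
    using dist unfolding hilbert_dist_def by (auto split: if_splits)
  define p where "p = real_of_ereal (hilbert_delta C a b)"
  define q where "q = real_of_ereal (hilbert_delta C b a)"
  have p: "hilbert_delta C a b = ereal p" and q: "hilbert_delta C b a = ereal q"
    using finite hilbert_delta_nonneg[of C a b] hilbert_delta_nonneg[of C b a]
    unfolding p_def q_def by (auto simp: ereal_real)
  have "0 \<le> p" using hilbert_delta_nonneg[of C a b] p by simp
  have "\<beta> \<le> q" using lower q by simp
  have "p \<le> exp D / \<beta>"
  proof (cases "p = 0")
    case True then show ?thesis using \<open>0 < \<beta>\<close> by simp
  next
    case False
    then have "0 < p * q" using \<open>0 \<le> p\<close> \<open>\<beta> \<le> q\<close> \<open>0 < \<beta>\<close> by simp
    moreover have "ln (p * q) \<le> D"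
      using dist finite unfolding hilbert_dist_def p_def q_def by simp
    ultimately have "p * q \<le> exp D" by (metis exp_le_cancel_iff exp_ln)
    moreover have "p * \<beta> \<le> p * q" using \<open>\<beta> \<le> q\<close> \<open>0 \<le> p\<close> by (rule mult_left_mono)
    ultimately show ?thesis using \<open>0 < \<beta>\<close> by (simp add: le_divide_eq)
  qed
  then show ?thesis using p by simp
qed

lemma hilbert_dist_le_diam:
  assumes "a \<in> C1" "b \<in> C1" "a \<noteq> 0" "b \<noteq> 0"
  shows "hilbert_dist C a b \<le> hilbert_diam C C1"
  unfolding hilbert_diam_def
  using SUP_upper[of "(a, b)" "(C1 - {0}) \<times> (C1 - {0})" "\<lambda>p. hilbert_dist C (fst p) (snd p)"]
    assms by auto

lemma ball_subset_birkhoff_cone: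
  assumes cone: "birkhoff_cone C" and ball_x: "ball x r \<subseteq> C"
    and delta: "hilbert_delta C y x \<le> ereal s" and "0 < s"
  shows "ball y (r / s) \<subseteq> C"
proof
  fix z assume "z \<in> ball y (r / s)"
  then have "norm (z - y) * s < r"
    using \<open>0 < s\<close> by (simp add: dist_norm norm_minus_commute pos_less_divide_eq)
  \<comment> \<open>the infimum \<open>hilbert_delta C y x\<close> need not be attained, so \<open>s\<close> is enlarged a little\<close>
  define \<epsilon> where "\<epsilon> = (r - norm (z - y) * s) / (norm (z - y) + 1)"
  have "0 < \<epsilon>" using \<open>norm (z - y) * s < r\<close> unfolding \<epsilon>_def
    by (smt (verit) divide_pos_pos norm_ge_zero)
  have "norm (z - y) * \<epsilon> = (r - norm (z - y) * s) * (norm (z - y) / (norm (z - y) + 1))"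
    unfolding \<epsilon>_def by simp
  also have "\<dots> < (r - norm (z - y) * s) * 1"
    using \<open>norm (z - y) * s < r\<close>
    by (intro mult_strict_left_mono) (auto simp: add_nonneg_pos)
  finally have "norm (z - y) * (s + \<epsilon>) < r" by (simp add: distrib_left)
  have "hilbert_delta C y x < ereal (s + \<epsilon>)"
    using delta by (rule order.strict_trans1) (simp add: \<open>0 < \<epsilon>\<close>)
  then obtain t where "0 < t" "t < s + \<epsilon>" and ty_x: "t *\<^sub>R y - x \<in> C"
    by (rule hilbert_delta_lessE)
  have "norm (t *\<^sub>R (z - y)) < r"
    using \<open>0 < t\<close> \<open>t < s + \<epsilon>\<close> \<open>norm (z - y) * (s + \<epsilon>) < r\<close>
    by (smt (verit) mult_right_mono norm_ge_zero norm_scaleR mult.commute)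
  then have "x + t *\<^sub>R (z - y) \<in> C" using ball_x by (auto simp: dist_norm)
  then have "(t *\<^sub>R y - x) + (x + t *\<^sub>R (z - y)) \<in> C"
    using birkhoff_cone_add[OF cone ty_x] by blast
  then have "t *\<^sub>R z \<in> C" by (simp add: algebra_simps)
  then show "z \<in> C" using birkhoff_cone_scaleR_cancel[OF cone \<open>0 < t\<close>] by blast
qed

theorem lemmaA10:
  fixes C C1 :: "'a::banach set" and l :: "'a \<Rightarrow> real" and K r \<Delta> :: real and x :: 'a
  assumes cone: "birkhoff_cone C"
    and int: "interior C \<noteq> {}"
    and lin: "bounded_linear l"
    and norm_l: "onorm l = 1"
    and Kpos: "0 < K"
    and Kbounds: "\<And>u. u \<in> C \<Longrightarrow> (1 / K) * norm u \<le> l u \<and> l u \<le> norm u"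
    and sub: "subcone C1 C"
    and diam: "hilbert_diam C C1 = ereal \<Delta>"
    and xC1: "x \<in> C1" and lx: "l x = 1"
    and rpos: "r > 0" and ball_sub: "ball x r \<subseteq> C1"
  shows "\<forall>y \<in> C1. ball y ((1 / K) * r * exp (- \<Delta>) * norm y) \<subseteq> C"
proof (intro ballI)
  fix y assume "y \<in> C1"
  have "C1 \<subseteq> C" using sub unfolding subcone_def by simp
  show "ball y ((1 / K) * r * exp (- \<Delta>) * norm y) \<subseteq> C"
  proof (cases "y = 0")
    case False
    have "x \<noteq> 0" using lx linear_0[OF bounded_linear.linear[OF lin]] by auto
    then have "hilbert_dist C y x \<le> ereal \<Delta>"
      using hilbert_dist_le_diam[OF \<open>y \<in> C1\<close> xC1 False, of C] diam by simp
    moreover have "ereal (norm y / K) \<le> hilbert_delta C x y"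
    proof -
      have nonneg: "0 \<le> l u" if "u \<in> C" for u
        using Kpos by (intro order_trans[OF _ conjunct1[OF Kbounds[OF that]]]) simp
      have "ereal (l y / l x) \<le> hilbert_delta C x y"
        by (rule hilbert_delta_ge_functional[OF bounded_linear.linear[OF lin]])
          (use nonneg lx in auto)
      moreover have "norm y / K \<le> l y / l x"
        using Kbounds[of y] \<open>y \<in> C1\<close> \<open>C1 \<subseteq> C\<close> lx by auto
      ultimately show ?thesis by (metis ereal_less_eq(3) order_trans)
    qed
    ultimately have "hilbert_delta C y x \<le> ereal (exp \<Delta> / (norm y / K))"
      by (rule hilbert_delta_le_of_dist) (use Kpos False in simp)
    then have "ball y (r / (exp \<Delta> / (norm y / K))) \<subseteq> C"
      by (rule ball_subset_birkhoff_cone[OF cone order_trans[OF ball_sub \<open>C1 \<subseteq> C\<close>]])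
        (use Kpos False in simp)
    moreover have "r / (exp \<Delta> / (norm y / K)) = (1 / K) * r * exp (- \<Delta>) * norm y"
      by (simp add: exp_minus field_simps)
    ultimately show ?thesis by simp
  qed simp
qed

end
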